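(* Let $\mathcal{A}$ be a finite set of responses with $|\mathcal{A}|\ge 2$. For each $i\in\mathcal{A}$ let $p_i>0$ with $\sum_{i\in\mathcal{A}}p_i=1$, and let $r^*_i\in\mathbb{R}$. Define $$\alpha_i=\sum_{j\neq i}\frac{p_i}{p_i+p_j},\qquad \beta_i=\sum_{j\neq i}\frac{e^{r^*_i}}{e^{r^*_i}+e^{r^*_j}},\qquad w_i=-(\alpha_i-\beta_i).$$ Suppose $\beta_i$ monotonically increases with $p_i$ (i.e. $\beta_i=h(p_i)$ for all $i\in\mathcal{A}$, for some monotonically increasing function $h$). Then, with all expectations, variances and covariances taken over $i$ drawn uniformly at random from $\mathcal{A}$, $$\operatorname{Var}[w_ip_i]-\operatorname{Var}[w_i]\,\mathbb{E}[p_i^2]\;\geq\;2\Big(\operatorname{Cov}[\alpha_i,\beta_i]\,\mathbb{E}[p_i^2]-\operatorname{Cov}[\alpha_ip_i,\beta_ip_i]\Big).$$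
   Context: Interpretation: for a fixed prompt $x$, $p_i=\pi_\theta(y_i\mid x)$ is the model probability of response $y_i$, and $r^*_i$ is the value of the optimal reward on $(x,y_i)$. The random index $i$ is uniform over the response set $\mathcal{A}$, so e.g. $\mathbb{E}[p_i^2]=\frac{1}{|\mathcal{A}|}\sum_{i\in\mathcal{A}}p_i^2$. *)

theory Defs
  imports Complex_Main
begin

definition uexp :: "'a set \<Rightarrow> ('a \<Rightarrow> real) \<Rightarrow> real" where
  "uexp A f = (\<Sum>i\<in>A. f i) / real (card A)"

definition ucov :: "'a set \<Rightarrow> ('a \<Rightarrow> real) \<Rightarrow> ('a \<Rightarrow> real) \<Rightarrow> real" where
  "ucov A f g = uexp A (\<lambda>i. (f i - uexp A f) * (g i - uexp A g))"

definition uvar :: "'a set \<Rightarrow> ('a \<Rightarrow> real) \<Rightarrow> real" where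
  "uvar A f = uexp A (\<lambda>i. (f i - uexp A f)^2)"

definition alpha :: "'a set \<Rightarrow> ('a \<Rightarrow> real) \<Rightarrow> 'a \<Rightarrow> real" where
  "alpha A p i = (\<Sum>j\<in>A - {i}. p i / (p i + p j))"

definition beta :: "'a set \<Rightarrow> ('a \<Rightarrow> real) \<Rightarrow> 'a \<Rightarrow> real" where
  "beta A r i = (\<Sum>j\<in>A - {i}. exp (r i) / (exp (r i) + exp (r j)))"

definition wgt :: "'a set \<Rightarrow> ('a \<Rightarrow> real) \<Rightarrow> ('a \<Rightarrow> real) \<Rightarrow> 'a \<Rightarrow> real" where
  "wgt A p r i = - (alpha A p i - beta A r i)"

end

theory Submission
  imports Defs
begin

(* With D f = Var[f p] - Var[f] E[p^2], the difference of the two sides is D alpha + D beta: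
   w = beta - alpha, and the variance of a difference expands into two variances and a covariance.
   Both alpha and beta are nonnegative and increase with p, and D f >= 0 for every such f.  Write
   variances as double sums over pairs.  As f is constant where p ties, each double sum is twice
   the sum over pairs with p_i <= p_j, and for those (f_i p_i - f_j p_j)^2 >= (f_i - f_j)^2 p_j^2.
   Summing over i turns the right-hand side into lower_spread f j * p_j^2, and Chebyshev's sum
   inequality for the two increasing functions lower_spread f and p^2 replaces the weights p_j^2
   by their mean E[p^2]. *)

lemma sum_sum_diff_mult_diff:
  fixes f g :: "'a \<Rightarrow> real"
  assumes "finite A"
  shows "(\<Sum>i\<in>A. \<Sum>j\<in>A. (f i - f j) * (g i - g j))
         = 2 * (real (card A) * (\<Sum>i\<in>A. f i * g i) - (\<Sum>i\<in>A. f i) * (\<Sum>i\<in>A. g i))"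
  using assms
  by (simp add: algebra_simps sum_subtractf sum.distrib sum_distrib_left sum_distrib_right
      sum.swap[of "\<lambda>i j. f j * g i"])

lemma ucov_eq_sum_sum:
  fixes f g :: "'a \<Rightarrow> real"
  assumes "finite A"
  shows "ucov A f g = (\<Sum>i\<in>A. \<Sum>j\<in>A. (f i - f j) * (g i - g j)) / (2 * real (card A) ^ 2)"
proof (cases "A = {}")
  case False
  define n where "n = real (card A)"
  define a where "a = uexp A f"
  define b where "b = uexp A g"
  have n: "n > 0" using assms False by (simp add: n_def card_gt_0_iff)
  have "(f i - a) * (g i - b) = f i * g i - b * f i - a * g i + a * b" for i
    by (simp add: algebra_simps)
  then have "(\<Sum>i\<in>A. (f i - a) * (g i - b))
      = (\<Sum>i\<in>A. f i * g i) - b * sum f A - a * sum g A + n * (a * b)"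
    by (simp add: sum.distrib sum_subtractf sum_distrib_left n_def)
  also have "\<dots> = (\<Sum>i\<in>A. f i * g i) - sum f A * sum g A / n"
    using n by (simp add: a_def b_def uexp_def n_def[symmetric] field_simps)
  finally show ?thesis
    using n unfolding ucov_def a_def[symmetric] b_def[symmetric] sum_sum_diff_mult_diff[OF assms]
    by (simp add: uexp_def n_def[symmetric] field_simps power2_eq_square)
qed (simp add: ucov_def uexp_def)

lemma uvar_eq_ucov: "uvar A f = ucov A f f"
  by (simp add: uvar_def ucov_def power2_eq_square)

lemma uvar_eq_sum_sum:
  assumes "finite A"
  shows "uvar A f = (\<Sum>i\<in>A. \<Sum>j\<in>A. (f i - f j)\<^sup>2) / (2 * real (card A) ^ 2)"
  unfolding uvar_eq_ucov ucov_eq_sum_sum[OF assms] by (simp add: power2_eq_square)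

lemma ucov_commute: "ucov A f g = ucov A g f"
  by (simp add: ucov_def mult.commute)

lemma uvar_diff:
  assumes "finite A"
  shows "uvar A (\<lambda>i. f i - g i) = uvar A f + uvar A g - 2 * ucov A f g"
proof -
  have "(f i - g i - (f j - g j)) * (f i - g i - (f j - g j))
      = (f i - f j) * (f i - f j) + (g i - g j) * (g i - g j) - 2 * ((f i - f j) * (g i - g j))"
    for i j
    by (simp add: algebra_simps)
  then show ?thesis
    unfolding uvar_eq_ucov ucov_eq_sum_sum[OF assms]
    by (simp add: sum_subtractf sum.distrib sum_distrib_left diff_divide_distrib add_divide_distrib)
qed

definition increasing_with :: "'a set \<Rightarrow> ('a \<Rightarrow> 'b::order) \<Rightarrow> ('a \<Rightarrow> 'c::order) \<Rightarrow> bool" where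
  "increasing_with A p f \<longleftrightarrow> (\<forall>i\<in>A. \<forall>j\<in>A. p i \<le> p j \<longrightarrow> f i \<le> f j)"

lemma increasing_withD:
  "increasing_with A p f \<Longrightarrow> i \<in> A \<Longrightarrow> j \<in> A \<Longrightarrow> p i \<le> p j \<Longrightarrow> f i \<le> f j"
  by (simp add: increasing_with_def)

lemma increasing_with_eq:
  "increasing_with A p f \<Longrightarrow> i \<in> A \<Longrightarrow> j \<in> A \<Longrightarrow> p i = p j \<Longrightarrow> f i = f j"
  by (metis increasing_withD order_refl order_antisym)

lemma Chebyshev_sum_upper_increasing:
  fixes f g :: "'a \<Rightarrow> real" and p :: "'a \<Rightarrow> 'b::linorder"
  assumes fin: "finite A" and "increasing_with A p f" and "increasing_with A p g"
  shows "(\<Sum>i\<in>A. f i) * (\<Sum>i\<in>A. g i) \<le> real (card A) * (\<Sum>i\<in>A. f i * g i)"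
proof -
  have "0 \<le> (f i - f j) * (g i - g j)" if "i \<in> A" "j \<in> A" for i j
    using increasing_withD[OF assms(2) that] increasing_withD[OF assms(2) that(2,1)]
      increasing_withD[OF assms(3) that] increasing_withD[OF assms(3) that(2,1)]
    by (cases "p i \<le> p j") (auto intro: mult_nonpos_nonpos)
  then have "0 \<le> (\<Sum>i\<in>A. \<Sum>j\<in>A. (f i - f j) * (g i - g j))"
    by (intro sum_nonneg) auto
  then show ?thesis
    unfolding sum_sum_diff_mult_diff[OF fin] by simp
qed

lemma sum_sum_symmetric_eq_ordered:
  fixes e :: "'a \<Rightarrow> 'a \<Rightarrow> real" and p :: "'a \<Rightarrow> 'b::linorder"
  assumes "finite A"
    and sym: "\<And>i j. e i j = e j i"
    and ties: "\<And>i j. i \<in> A \<Longrightarrow> j \<in> A \<Longrightarrow> p i = p j \<Longrightarrow> e i j = 0"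
  shows "(\<Sum>i\<in>A. \<Sum>j\<in>A. e i j) = 2 * (\<Sum>i\<in>A. \<Sum>j\<in>A. if p i \<le> p j then e i j else 0)"
proof -
  have "(\<Sum>i\<in>A. \<Sum>j\<in>A. if p j < p i then e i j else 0)
      = (\<Sum>j\<in>A. \<Sum>i\<in>A. if p j < p i then e j i else 0)"
    by (subst sum.swap) (intro sum.cong refl, metis sym)
  also have "\<dots> = (\<Sum>i\<in>A. \<Sum>j\<in>A. if p i \<le> p j then e i j else 0)"
    using ties by (intro sum.cong refl) auto
  finally have "(\<Sum>i\<in>A. \<Sum>j\<in>A. if p j < p i then e i j else 0)
      = (\<Sum>i\<in>A. \<Sum>j\<in>A. if p i \<le> p j then e i j else 0)" .
  moreover have "e i j = (if p i \<le> p j then e i j else 0) + (if p j < p i then e i j else 0)" for i j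
    by (simp add: not_le[symmetric])
  then have "(\<Sum>i\<in>A. \<Sum>j\<in>A. e i j) = (\<Sum>i\<in>A. \<Sum>j\<in>A. if p i \<le> p j then e i j else 0)
      + (\<Sum>i\<in>A. \<Sum>j\<in>A. if p j < p i then e i j else 0)"
    by (simp only: sum.distrib[symmetric])
  ultimately show ?thesis by simp
qed

definition lower_spread :: "'a set \<Rightarrow> ('a \<Rightarrow> 'b::linorder) \<Rightarrow> ('a \<Rightarrow> real) \<Rightarrow> 'a \<Rightarrow> real" where
  "lower_spread A p f j = (\<Sum>i\<in>A. if p i \<le> p j then (f i - f j)\<^sup>2 else 0)"

lemma sum_lower_spread:
  assumes fin: "finite A" and incr: "increasing_with A p f"
  shows "(\<Sum>i\<in>A. \<Sum>j\<in>A. (f i - f j)\<^sup>2) = 2 * (\<Sum>j\<in>A. lower_spread A p f j)"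
proof -
  have "(\<Sum>i\<in>A. \<Sum>j\<in>A. (f i - f j)\<^sup>2)
      = 2 * (\<Sum>i\<in>A. \<Sum>j\<in>A. if p i \<le> p j then (f i - f j)\<^sup>2 else 0)"
  proof (rule sum_sum_symmetric_eq_ordered[OF fin])
    show "(f i - f j)\<^sup>2 = 0" if "i \<in> A" "j \<in> A" "p i = p j" for i j
      using increasing_with_eq[OF incr that] by simp
  qed (rule power2_commute)
  then show ?thesis
    unfolding lower_spread_def
    using sum.swap[of "\<lambda>i j. if p i \<le> p j then (f i - f j)\<^sup>2 else 0" A A] by simp
qed

lemma increasing_with_lower_spread:
  assumes incr: "increasing_with A p f"
  shows "increasing_with A p (lower_spread A p f)"
  unfolding increasing_with_def lower_spread_def
proof (intro ballI impI sum_mono)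
  fix i j k assume "j \<in> A" "k \<in> A" "p j \<le> p k" "i \<in> A"
  then show "(if p i \<le> p j then (f i - f j)\<^sup>2 else 0) \<le> (if p i \<le> p k then (f i - f k)\<^sup>2 else 0)"
    using increasing_withD[OF incr, of i j] increasing_withD[OF incr, of j k]
    by (auto simp: power2_commute[of "f i"] intro: power_mono)
qed

lemma square_diff_mult_le:
  fixes a b x y :: real
  assumes "0 \<le> a" "a \<le> b" "0 \<le> x" "x \<le> y"
  shows "((a - b) * y)\<^sup>2 \<le> (a * x - b * y)\<^sup>2"
proof -
  have "(b - a) * y \<le> b * y - a * x"
    using assms by (simp add: algebra_simps mult_left_mono)
  moreover have "0 \<le> (b - a) * y"
    using assms by simp
  ultimately have "((b - a) * y)\<^sup>2 \<le> (b * y - a * x)\<^sup>2"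
    by (rule power_mono)
  then show ?thesis
    by (simp add: power_mult_distrib power2_commute)
qed

lemma sum_lower_spread_mult_le:
  fixes f p :: "'a \<Rightarrow> real"
  assumes fin: "finite A"
    and f_nonneg: "\<And>i. i \<in> A \<Longrightarrow> 0 \<le> f i" and p_nonneg: "\<And>i. i \<in> A \<Longrightarrow> 0 \<le> p i"
    and incr: "increasing_with A p f"
  shows "2 * (\<Sum>j\<in>A. lower_spread A p f j * (p j)\<^sup>2) \<le> (\<Sum>i\<in>A. \<Sum>j\<in>A. (f i * p i - f j * p j)\<^sup>2)"
proof -
  have "(if p i \<le> p j then (f i - f j)\<^sup>2 else 0) * (p j)\<^sup>2
      = (if p i \<le> p j then ((f i - f j) * p j)\<^sup>2 else 0)" for i j
    by (simp add: power_mult_distrib)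
  then have "2 * (\<Sum>j\<in>A. lower_spread A p f j * (p j)\<^sup>2)
      = 2 * (\<Sum>i\<in>A. \<Sum>j\<in>A. if p i \<le> p j then ((f i - f j) * p j)\<^sup>2 else 0)"
    unfolding lower_spread_def sum_distrib_right
    using sum.swap[of "\<lambda>i j. if p i \<le> p j then ((f i - f j) * p j)\<^sup>2 else 0" A A] by simp
  also have "\<dots> \<le> 2 * (\<Sum>i\<in>A. \<Sum>j\<in>A. if p i \<le> p j then (f i * p i - f j * p j)\<^sup>2 else 0)"
    using f_nonneg p_nonneg increasing_withD[OF incr]
    by (intro mult_left_mono sum_mono) (auto intro: square_diff_mult_le)
  also have "\<dots> = (\<Sum>i\<in>A. \<Sum>j\<in>A. (f i * p i - f j * p j)\<^sup>2)"
  proof (rule sum_sum_symmetric_eq_ordered[OF fin, symmetric])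
    show "(f i * p i - f j * p j)\<^sup>2 = 0" if "i \<in> A" "j \<in> A" "p i = p j" for i j
      using increasing_with_eq[OF incr that] that(3) by simp
  qed (rule power2_commute)
  finally show ?thesis .
qed

lemma uvar_mult_increasing_lower_bound:
  fixes f p :: "'a \<Rightarrow> real"
  assumes fin: "finite A"
    and f_nonneg: "\<And>i. i \<in> A \<Longrightarrow> 0 \<le> f i" and p_nonneg: "\<And>i. i \<in> A \<Longrightarrow> 0 \<le> p i"
    and incr: "increasing_with A p f"
  shows "uvar A f * uexp A (\<lambda>i. (p i)\<^sup>2) \<le> uvar A (\<lambda>i. f i * p i)"
proof (cases "A = {}")
  case False
  define n where "n = real (card A)"
  define G where "G = lower_spread A p f"
  have "n > 0" using fin False by (simp add: n_def card_gt_0_iff)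
  have "increasing_with A p (\<lambda>i. (p i)\<^sup>2)"
    using p_nonneg by (auto simp: increasing_with_def intro: power_mono)
  then have cheb: "(\<Sum>j\<in>A. G j) * (\<Sum>j\<in>A. (p j)\<^sup>2) \<le> n * (\<Sum>j\<in>A. G j * (p j)\<^sup>2)"
    unfolding n_def G_def
    by (rule Chebyshev_sum_upper_increasing[OF fin increasing_with_lower_spread[OF incr]])
  have "uvar A f * uexp A (\<lambda>i. (p i)\<^sup>2) = (\<Sum>j\<in>A. G j) * (\<Sum>j\<in>A. (p j)\<^sup>2) / n ^ 3"
    unfolding uvar_eq_sum_sum[OF fin] uexp_def sum_lower_spread[OF fin incr] G_def n_def[symmetric]
    by (simp add: power2_eq_square power3_eq_cube)
  also have "\<dots> \<le> n * (\<Sum>j\<in>A. G j * (p j)\<^sup>2) / n ^ 3"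
    using cheb \<open>n > 0\<close> by (simp add: divide_right_mono)
  also have "\<dots> \<le> (\<Sum>i\<in>A. \<Sum>j\<in>A. (f i * p i - f j * p j)\<^sup>2) / (2 * n\<^sup>2)"
    using sum_lower_spread_mult_le[OF fin f_nonneg p_nonneg incr] \<open>n > 0\<close>
    by (simp add: G_def field_simps power2_eq_square power3_eq_cube)
  also have "\<dots> = uvar A (\<lambda>i. f i * p i)"
    unfolding uvar_eq_sum_sum[OF fin] n_def ..
  finally show ?thesis .
qed (simp add: uvar_eq_sum_sum)

lemma frac_add_const_mono:
  fixes x y c :: real
  assumes "0 < x" "x \<le> y" "0 < c"
  shows "x / (x + c) \<le> y / (y + c)"
proof -
  have "x * (y + c) \<le> y * (x + c)"
    using assms by (simp add: algebra_simps mult_right_mono)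
  then show ?thesis
    using assms by (simp add: divide_simps)
qed

lemma alpha_nonneg:
  assumes "\<And>j. j \<in> A \<Longrightarrow> 0 \<le> p j" and "i \<in> A"
  shows "0 \<le> alpha A p i"
  unfolding alpha_def using assms by (auto intro!: sum_nonneg)

lemma beta_nonneg: "0 \<le> beta A r i"
  unfolding beta_def by (auto intro!: sum_nonneg add_pos_pos)

lemma increasing_with_alpha:
  assumes fin: "finite A" and pos: "\<And>i. i \<in> A \<Longrightarrow> 0 < p i"
  shows "increasing_with A p (alpha A p)"
  unfolding increasing_with_def
proof (intro ballI impI)
  fix i j assume i: "i \<in> A" and j: "j \<in> A" and le: "p i \<le> p j"
  show "alpha A p i \<le> alpha A p j"
  proof (cases "i = j")
    case False
    define B where "B = A - {i} - {j}"
    have B: "finite B" "i \<notin> B" "j \<notin> B" "B \<subseteq> A"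
      using fin by (auto simp: B_def)
    have "A - {i} = insert j B" "A - {j} = insert i B"
      using i j False by (auto simp: B_def)
    then have alpha_i: "alpha A p i = p i / (p i + p j) + (\<Sum>m\<in>B. p i / (p i + p m))"
      and alpha_j: "alpha A p j = p j / (p j + p i) + (\<Sum>m\<in>B. p j / (p j + p m))"
      using B by (simp_all add: alpha_def)
    have "p i / (p i + p j) \<le> p j / (p i + p j)"
      using pos[OF i] pos[OF j] le by (intro divide_right_mono) simp_all
    then have "p i / (p i + p j) \<le> p j / (p j + p i)"
      by (simp add: add.commute)
    moreover have "(\<Sum>m\<in>B. p i / (p i + p m)) \<le> (\<Sum>m\<in>B. p j / (p j + p m))"
    proof (rule sum_mono)
      fix m assume "m \<in> B"
      then show "p i / (p i + p m) \<le> p j / (p j + p m)"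
        using B(4) pos[OF i] pos le by (intro frac_add_const_mono) auto
    qed
    ultimately show ?thesis
      unfolding alpha_i alpha_j by simp
  qed simp
qed

lemma wgt_eq: "wgt A p r i = beta A r i - alpha A p i"
  by (simp add: wgt_def)

theorem theorem4p11:
  fixes A :: "'a set" and p r :: "'a \<Rightarrow> real"
  assumes "finite A" and "card A \<ge> 2"
    and "\<forall>i\<in>A. p i > 0" and "(\<Sum>i\<in>A. p i) = 1"
    and "\<exists>h :: real \<Rightarrow> real. mono h \<and> (\<forall>i\<in>A. beta A r i = h (p i))"
  shows "uvar A (\<lambda>i. wgt A p r i * p i) - uvar A (wgt A p r) * uexp A (\<lambda>i. (p i)^2)
         \<ge> 2 * (ucov A (alpha A p) (beta A r) * uexp A (\<lambda>i. (p i)^2)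
                - ucov A (\<lambda>i. alpha A p i * p i) (\<lambda>i. beta A r i * p i))"
proof -
  note fin = assms(1)
  have pos: "\<And>i. i \<in> A \<Longrightarrow> 0 < p i" and p_nonneg: "\<And>i. i \<in> A \<Longrightarrow> 0 \<le> p i"
    using assms(3) by auto
  obtain h :: "real \<Rightarrow> real" where "mono h" and h: "\<forall>i\<in>A. beta A r i = h (p i)"
    using assms(5) by blast
  have beta_incr: "increasing_with A p (beta A r)"
    using h \<open>mono h\<close> by (auto simp: increasing_with_def dest: monoD)
  have D_beta: "uvar A (beta A r) * uexp A (\<lambda>i. (p i)\<^sup>2) \<le> uvar A (\<lambda>i. beta A r i * p i)"
    by (rule uvar_mult_increasing_lower_bound[OF fin beta_nonneg p_nonneg beta_incr])
  have D_alpha: "uvar A (alpha A p) * uexp A (\<lambda>i. (p i)\<^sup>2) \<le> uvar A (\<lambda>i. alpha A p i * p i)"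
    by (rule uvar_mult_increasing_lower_bound
        [OF fin alpha_nonneg[OF p_nonneg] p_nonneg increasing_with_alpha[OF fin pos]])
  have "uvar A (\<lambda>i. wgt A p r i * p i) = uvar A (\<lambda>i. beta A r i * p i - alpha A p i * p i)"
    by (simp add: wgt_eq left_diff_distrib)
  also have "\<dots> = uvar A (\<lambda>i. beta A r i * p i) + uvar A (\<lambda>i. alpha A p i * p i)
      - 2 * ucov A (\<lambda>i. alpha A p i * p i) (\<lambda>i. beta A r i * p i)"
    by (simp add: uvar_diff[OF fin] ucov_commute)
  finally have var_wp: "uvar A (\<lambda>i. wgt A p r i * p i) = \<dots>" .
  have var_w: "uvar A (wgt A p r)
      = uvar A (beta A r) + uvar A (alpha A p) - 2 * ucov A (alpha A p) (beta A r)"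
    using uvar_diff[OF fin, of "beta A r" "alpha A p"] by (simp add: wgt_eq[abs_def] ucov_commute)
  show ?thesis
    using D_alpha D_beta unfolding var_wp var_w by (simp add: algebra_simps)
qed

end
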